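(* Let $G$ be a simple undirected graph on the vertex set $[n]=\{1,\dots,n\}$, let $t$ be the number of triangles in $G$, and let $\Delta=\max_{e\in E(G)}\delta_e$, where $\delta_e$ is the number of triangles of $G$ containing the edge $e$. Let $N$ be a positive integer and $p=1/N$. Color each vertex of $G$ independently and uniformly at random with one of $N$ colors (so each vertex receives any given color with probability $p$), and let $T$ be the number of monochromatic triangles, i.e. triangles of $G$ all three of whose vertices receive the same color. If $$p \geq \max\left( \frac{\Delta \log n}{t}, \frac{\log n}{\sqrt{t}}\right),$$ then $T\sim \mathbb{E}[T]$ with probability $1-o(1)$; that is, for every constant $\epsilon>0$, $\Pr\big[|T-\mathbb{E}[T]|\geq \epsilon\,\mathbb{E}[T]\big]=o(1)$ as $n\to\infty$.
   Context: The statement is asymptotic: $G$ (and hence $t,\Delta$) and $p$ may depend on $n$, and $o(1)$ refers to $n\to\infty$. Here $\mathbb{E}[T]=p^2 t$. This random coloring is the sampling step of the "colorful triangle sampling" algorithm, which keeps exactly the monochromatic edges (edges whose endpoints receive the same color), counts the triangles $T$ among them, and outputs $T/p^2$ as an estimate of $t$. *)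

theory Defs
  imports "HOL-Probability.Probability"
begin

definition simple_graph_on :: "nat \<Rightarrow> nat set set \<Rightarrow> bool" where
  "simple_graph_on n E \<longleftrightarrow> (\<forall>e\<in>E. e \<subseteq> {1..n} \<and> card e = 2)"

definition triangles :: "nat \<Rightarrow> nat set set \<Rightarrow> nat set set" where
  "triangles n E = {S. S \<subseteq> {1..n} \<and> card S = 3 \<and>
                      (\<forall>x\<in>S. \<forall>y\<in>S. x \<noteq> y \<longrightarrow> {x, y} \<in> E)}"

definition num_triangles :: "nat \<Rightarrow> nat set set \<Rightarrow> nat" where
  "num_triangles n E = card (triangles n E)"

definition edge_tri_count :: "nat \<Rightarrow> nat set set \<Rightarrow> nat set \<Rightarrow> nat" where
  "edge_tri_count n E e = card {S \<in> triangles n E. e \<subseteq> S}"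

definition max_edge_tri :: "nat \<Rightarrow> nat set set \<Rightarrow> nat" where
  "max_edge_tri n E = (if E = {} then 0 else Max (edge_tri_count n E ` E))"

definition coloring :: "nat \<Rightarrow> nat \<Rightarrow> (nat \<Rightarrow> nat) pmf" where
  "coloring n N = Pi_pmf {1..n} 0 (\<lambda>_. pmf_of_set {0..<N})"

definition mono_triangles :: "nat \<Rightarrow> nat set set \<Rightarrow> (nat \<Rightarrow> nat) \<Rightarrow> nat" where
  "mono_triangles n E c = card {S \<in> triangles n E. \<exists>k. \<forall>v\<in>S. c v = k}"

end

(* T is the sum over the t triangles of the indicators that a triangle is monochromatic,
   each of probability p^2, so E T = t p^2.  Two triangles are both monochromatic with
   probability p^4 unless they share an edge (p^3) or coincide (p^2), and a triangle shares
   an edge with at most 3 Delta others, so Var T <= t p^2 + 3 t Delta p^3.  Chebyshev's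
   inequality then bounds the probability of a relative deviation eps by
   (1/(t p^2) + 3 Delta/(t p)) / eps^2, which the hypothesis on p makes at most
   (1/log^2 n + 3/log n) / eps^2 = o(1). *)

theory Submission
  imports Defs "HOL-Real_Asymp.Real_Asymp"
begin

definition monochromatic :: "'v set \<Rightarrow> ('v \<Rightarrow> 'c) set" where
  "monochromatic A = {c. \<exists>k. \<forall>v\<in>A. c v = k}"

lemma monochromatic_Int_overlapping:
  assumes "A \<inter> B \<noteq> {}"
  shows "monochromatic A \<inter> monochromatic B = monochromatic (A \<union> B)"
proof -
  obtain x where "x \<in> A" "x \<in> B" using assms by blast
  thus ?thesis by (auto simp: monochromatic_def) (metis UnE)
qed

lemma measure_pmf_prob_cong_set_pmf:
  assumes "\<And>x. x \<in> set_pmf p \<Longrightarrow> x \<in> A \<longleftrightarrow> x \<in> B"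
  shows "measure_pmf.prob p A = measure_pmf.prob p B"
proof -
  have "A \<inter> set_pmf p = B \<inter> set_pmf p"
    using assms by blast
  thus ?thesis
    by (metis measure_Int_set_pmf)
qed

locale uniform_coloring =
  fixes V :: "'v set" and C :: "'c set" and dflt :: 'c
  assumes finite_V: "finite V" and finite_C: "finite C" and C_nonempty: "C \<noteq> {}"
begin

abbreviation P :: "('v \<Rightarrow> 'c) pmf" where
  "P \<equiv> Pi_pmf V dflt (\<lambda>_. pmf_of_set C)"

abbreviation q :: real where
  "q \<equiv> 1 / real (card C)"

lemma q_pos: "q > 0"
  using finite_C C_nonempty by (simp add: card_gt_0_iff)

lemma finite_set_P: "finite (set_pmf P)"
  using finite_V finite_C C_nonempty by (simp add: set_Pi_pmf o_def finite_PiE_dflt)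

lemma set_pmf_P_colors: "c \<in> set_pmf P \<Longrightarrow> v \<in> V \<Longrightarrow> c v \<in> C"
  using finite_V finite_C C_nonempty by (auto simp: set_Pi_pmf PiE_dflt_def)

lemma prob_agree_on:
  assumes "A \<subseteq> V" "f ` A \<subseteq> C"
  shows "measure_pmf.prob P {c. \<forall>v\<in>A. c v = f v} = q ^ card A"
proof -
  define B where "B v = (if v \<in> A then {f v} else UNIV)" for v
  have "{c. \<forall>v\<in>A. c v = f v} = Pi V B"
    using assms(1) by (auto simp: B_def Pi_def)
  hence "measure_pmf.prob P {c. \<forall>v\<in>A. c v = f v}
      = (\<Prod>v\<in>V. measure_pmf.prob (pmf_of_set C) (B v))"
    by (simp add: measure_Pi_pmf_Pi finite_V)
  also have "\<dots> = (\<Prod>v\<in>V. if v \<in> A then q else 1)"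
    using assms finite_C C_nonempty by (intro prod.cong) (auto simp: B_def measure_pmf_of_set)
  also have "\<dots> = q ^ card A"
    using assms(1) finite_V by (simp add: prod.If_cases Int_absorb1)
  finally show ?thesis .
qed

lemma prob_monochromatic:
  assumes "A \<subseteq> V" "A \<noteq> {}"
  shows "measure_pmf.prob P (monochromatic A) = q ^ (card A - 1)"
proof -
  have "measure_pmf.prob P (monochromatic A) = measure_pmf.prob P (\<Union>k\<in>C. {c. \<forall>v\<in>A. c v = k})"
  proof (rule measure_pmf_prob_cong_set_pmf)
    fix c assume "c \<in> set_pmf P"
    moreover obtain a where "a \<in> A" using assms(2) by auto
    ultimately have "c a \<in> C" using assms(1) set_pmf_P_colors by auto
    thus "c \<in> monochromatic A \<longleftrightarrow> c \<in> (\<Union>k\<in>C. {c. \<forall>v\<in>A. c v = k})"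
      using \<open>a \<in> A\<close> by (auto simp: monochromatic_def)
  qed
  also have "\<dots> = (\<Sum>k\<in>C. measure_pmf.prob P {c. \<forall>v\<in>A. c v = k})"
    using assms(2) finite_C
    by (intro measure_pmf.finite_measure_finite_Union) (auto simp: disjoint_family_on_def)
  also have "\<dots> = real (card C) * q ^ card A"
    using assms(1) by (simp add: prob_agree_on[where f = "\<lambda>_. _"] image_subset_iff)
  also have "\<dots> = q ^ (card A - 1)"
  proof -
    have "card A \<noteq> 0"
      using assms finite_V by (simp add: finite_subset)
    hence "q ^ card A = q * q ^ (card A - 1)"
      by (simp add: power_eq_if)
    thus ?thesis using q_pos by simp
  qed
  finally show ?thesis .
qed

lemma prob_monochromatic_Int_disjoint:
  assumes "A \<subseteq> V" "A \<noteq> {}" "B \<subseteq> V" "B \<noteq> {}" "A \<inter> B = {}"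
  shows "measure_pmf.prob P (monochromatic A \<inter> monochromatic B) = q ^ (card A + card B - 2)"
proof -
  define F :: "'c \<times> 'c \<Rightarrow> ('v \<Rightarrow> 'c) set"
    where "F kk = {c. (\<forall>v\<in>A. c v = fst kk) \<and> (\<forall>v\<in>B. c v = snd kk)}" for kk
  obtain a b where ab: "a \<in> A" "b \<in> B" using assms(2,4) by auto
  have "measure_pmf.prob P (monochromatic A \<inter> monochromatic B) = measure_pmf.prob P (\<Union>kk\<in>C \<times> C. F kk)"
  proof (rule measure_pmf_prob_cong_set_pmf)
    fix c assume "c \<in> set_pmf P"
    hence "(c a, c b) \<in> C \<times> C" using ab assms(1,3) set_pmf_P_colors by auto
    thus "c \<in> monochromatic A \<inter> monochromatic B \<longleftrightarrow> c \<in> (\<Union>kk\<in>C \<times> C. F kk)"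
      using ab by (auto simp: monochromatic_def F_def)
  qed
  also have "\<dots> = (\<Sum>kk\<in>C \<times> C. measure_pmf.prob P (F kk))"
  proof (rule measure_pmf.finite_measure_finite_Union)
    have "kk = jj" if "c \<in> F kk" "c \<in> F jj" for c kk jj
      using that ab by (auto simp: F_def prod_eq_iff)
    thus "disjoint_family_on F (C \<times> C)" by (auto simp: disjoint_family_on_def)
  qed (use finite_C in auto)
  also have "\<dots> = (\<Sum>kk\<in>C \<times> C. q ^ (card A + card B))"
  proof (rule sum.cong [OF refl])
    fix kk assume "kk \<in> C \<times> C"
    hence "measure_pmf.prob P {c. \<forall>v\<in>A \<union> B. c v = (if v \<in> A then fst kk else snd kk)}
        = q ^ card (A \<union> B)"
      using assms by (intro prob_agree_on) auto
    moreover have "{c. \<forall>v\<in>A \<union> B. c v = (if v \<in> A then fst kk else snd kk)} = F kk"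
      using assms(5) by (auto simp: F_def)
    ultimately show "measure_pmf.prob P (F kk) = q ^ (card A + card B)"
      using assms finite_V by (simp add: card_Un_disjoint finite_subset)
  qed
  also have "\<dots> = real (card C) ^ 2 * q ^ (card A + card B)"
    by (simp add: card_cartesian_product power2_eq_square)
  also have "\<dots> = q ^ (card A + card B - 2)"
  proof -
    have "card A \<noteq> 0" "card B \<noteq> 0"
      using assms finite_V by (simp_all add: finite_subset)
    hence "2 + (card A + card B - 2) = card A + card B" by simp
    hence "q ^ (card A + card B) = q ^ 2 * q ^ (card A + card B - 2)"
      by (metis power_add)
    thus ?thesis using q_pos by (simp add: power_one_over)
  qed
  finally show ?thesis .
qed

lemma prob_monochromatic_pair_le:
  assumes "S \<subseteq> V" "S' \<subseteq> V" "card S = 3" "card S' = 3"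
  shows "measure_pmf.prob P (monochromatic S \<inter> monochromatic S')
           \<le> q ^ 4 + (if S = S' then q ^ 2 else 0) + (if card (S \<inter> S') = 2 then q ^ 3 else 0)"
proof (cases "S \<inter> S' = {}")
  case True
  thus ?thesis
    using assms prob_monochromatic_Int_disjoint[of S S'] by force
next
  case False
  have fin: "finite S" "finite S'" using assms finite_V finite_subset by blast+
  have prob: "measure_pmf.prob P (monochromatic S \<inter> monochromatic S') = q ^ (card (S \<union> S') - 1)"
    using False assms prob_monochromatic[of "S \<union> S'"] by (auto simp: monochromatic_Int_overlapping)
  have card_Un: "card (S \<union> S') = 6 - card (S \<inter> S')"
    using card_Un_Int[OF fin] assms by simp
  have "card (S \<inter> S') \<noteq> 0" "card (S \<inter> S') \<le> 3"
    using False fin assms card_mono[of S "S \<inter> S'"] by auto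
  then consider "card (S \<inter> S') = 1" | "card (S \<inter> S') = 2" | "card (S \<inter> S') = 3"
    by linarith
  thus ?thesis
  proof cases
    case 3
    hence "S = S'"
      using fin assms card_subset_eq[of S "S \<inter> S'"] card_subset_eq[of S' "S \<inter> S'"] by auto
    thus ?thesis using prob card_Un 3 q_pos by simp
  qed (use prob card_Un q_pos in auto)
qed

lemma integrable_P [simp]: "integrable (measure_pmf P) (f :: _ \<Rightarrow> real)"
  by (rule integrable_measure_pmf_finite[OF finite_set_P])

lemma expectation_count_monochromatic:
  assumes "finite F" "\<And>S. S \<in> F \<Longrightarrow> S \<subseteq> V \<and> card S = 3"
  shows "measure_pmf.expectation P (\<lambda>c. \<Sum>S\<in>F. indicator (monochromatic S) c) = card F * q ^ 2"
proof -
  have "measure_pmf.expectation P (\<lambda>c. \<Sum>S\<in>F. indicator (monochromatic S) c)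
      = (\<Sum>S\<in>F. measure_pmf.prob P (monochromatic S))"
    by (simp add: Bochner_Integration.integral_sum)
  also have "\<dots> = (\<Sum>S\<in>F. q ^ 2)"
  proof (intro sum.cong refl)
    fix S assume "S \<in> F"
    hence "S \<subseteq> V" "card S = 3" using assms(2) by auto
    moreover from this have "S \<noteq> {}" by auto
    ultimately show "measure_pmf.prob P (monochromatic S) = q ^ 2"
      by (simp add: prob_monochromatic)
  qed
  finally show ?thesis by simp
qed

lemma variance_count_monochromatic_le:
  assumes "finite F" "\<And>S. S \<in> F \<Longrightarrow> S \<subseteq> V \<and> card S = 3"
    and "\<And>S. S \<in> F \<Longrightarrow> card {S' \<in> F. card (S \<inter> S') = 2} \<le> m"
  shows "measure_pmf.variance P (\<lambda>c. \<Sum>S\<in>F. indicator (monochromatic S) c)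
           \<le> card F * q ^ 2 + card F * m * q ^ 3"
proof -
  let ?X = "\<lambda>c. \<Sum>S\<in>F. indicator (monochromatic S) c :: real"
  have "measure_pmf.expectation P (\<lambda>c. (?X c)\<^sup>2)
      = (\<Sum>S\<in>F. \<Sum>S'\<in>F. measure_pmf.prob P (monochromatic S \<inter> monochromatic S'))"
    by (simp add: power2_eq_square sum_product Bochner_Integration.integral_sum flip: indicator_inter_arith)
  also have "\<dots> \<le> (\<Sum>S\<in>F. \<Sum>S'\<in>F. q ^ 4 + (if S = S' then q ^ 2 else 0)
                                  + (if card (S \<inter> S') = 2 then q ^ 3 else 0))"
    using assms(2) by (intro sum_mono prob_monochromatic_pair_le) auto
  also have "\<dots> = (\<Sum>S\<in>F. card F * q ^ 4 + q ^ 2 + card {S' \<in> F. card (S \<inter> S') = 2} * q ^ 3)"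
    using assms(1) by (simp add: sum.distrib sum.If_cases Int_def)
  also have "\<dots> \<le> (\<Sum>S\<in>F. card F * q ^ 4 + q ^ 2 + m * q ^ 3)"
    using assms(3) q_pos by (intro sum_mono add_left_mono mult_right_mono) auto
  finally have "measure_pmf.expectation P (\<lambda>c. (?X c)\<^sup>2)
      \<le> (card F * q ^ 2)\<^sup>2 + card F * q ^ 2 + card F * m * q ^ 3"
    by (simp add: algebra_simps power2_eq_square power4_eq_xxxx)
  moreover have "measure_pmf.variance P ?X
      = measure_pmf.expectation P (\<lambda>c. (?X c)\<^sup>2) - (measure_pmf.expectation P ?X)\<^sup>2"
    by (rule measure_pmf.variance_eq) simp_all
  moreover have "measure_pmf.expectation P ?X = card F * q ^ 2"
    by (rule expectation_count_monochromatic[OF assms(1,2)])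
  ultimately show ?thesis
    by simp
qed

end

lemma triangle_subset_card:
  assumes "S \<in> triangles n E"
  shows "S \<subseteq> {1..n}" "card S = 3"
  using assms by (simp_all add: triangles_def)

lemma finite_triangles: "finite (triangles n E)"
proof (rule finite_subset)
  show "triangles n E \<subseteq> Pow {1..n}"
    unfolding triangles_def by blast
qed simp

lemma edge_tri_count_le_max_edge_tri:
  assumes "simple_graph_on n E" "e \<in> E"
  shows "edge_tri_count n E e \<le> max_edge_tri n E"
proof -
  have "E \<subseteq> Pow {1..n}"
    using assms(1) unfolding simple_graph_on_def by blast
  hence "finite E"
    by (rule finite_subset) simp
  moreover have "max_edge_tri n E = Max (edge_tri_count n E ` E)"
    using assms(2) by (auto simp: max_edge_tri_def)
  ultimately show ?thesis
    using assms(2) by (simp add: Max_ge)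
qed

lemma card_triangles_sharing_edge_le:
  assumes G: "simple_graph_on n E" and S: "S \<in> triangles n E"
  shows "card {S' \<in> triangles n E. card (S \<inter> S') = 2} \<le> 3 * max_edge_tri n E"
proof -
  let ?edges = "{e. e \<subseteq> S \<and> card e = 2}"
  have "card S = 3"
    using triangle_subset_card[OF S] by simp
  hence "finite S"
    by (intro card_ge_0_finite) simp
  have card_edges: "card ?edges = 3"
    using n_subsets[of S 2] \<open>finite S\<close> \<open>card S = 3\<close> by (simp add: numeral_eq_Suc)
  have sharing_subset:
    "{S' \<in> triangles n E. card (S \<inter> S') = 2} \<subseteq> (\<Union>e\<in>?edges. {S' \<in> triangles n E. e \<subseteq> S'})"
  proof
    fix S' assume "S' \<in> {S' \<in> triangles n E. card (S \<inter> S') = 2}"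
    hence "S \<inter> S' \<in> ?edges" "S' \<in> {S'' \<in> triangles n E. S \<inter> S' \<subseteq> S''}" by auto
    thus "S' \<in> (\<Union>e\<in>?edges. {S' \<in> triangles n E. e \<subseteq> S'})" by (rule UN_I)
  qed
  have "card {S' \<in> triangles n E. card (S \<inter> S') = 2}
      \<le> card (\<Union>e\<in>?edges. {S' \<in> triangles n E. e \<subseteq> S'})"
  proof (rule card_mono[OF _ sharing_subset])
    show "finite (\<Union>e\<in>?edges. {S' \<in> triangles n E. e \<subseteq> S'})"
      by (rule finite_subset[OF _ finite_triangles]) blast
  qed
  also have "\<dots> \<le> (\<Sum>e\<in>?edges. edge_tri_count n E e)"
    unfolding edge_tri_count_def using \<open>finite S\<close> by (intro card_UN_le) simp
  also have "\<dots> \<le> (\<Sum>e\<in>?edges. max_edge_tri n E)"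
  proof (intro sum_mono edge_tri_count_le_max_edge_tri[OF G])
    fix e assume "e \<in> ?edges"
    then obtain x y where "x \<in> S" "y \<in> S" "x \<noteq> y" "e = {x, y}"
      by (auto simp: card_2_iff)
    thus "e \<in> E" using S by (auto simp: triangles_def)
  qed
  also have "\<dots> = 3 * max_edge_tri n E"
    using card_edges by simp
  finally show ?thesis .
qed

lemma mono_triangles_eq_sum_indicator:
  "real (mono_triangles n E c) = (\<Sum>S\<in>triangles n E. indicator (monochromatic S) c)"
proof -
  have "real (mono_triangles n E c) = (\<Sum>S\<in>{S \<in> triangles n E. c \<in> monochromatic S}. 1)"
    by (simp add: mono_triangles_def monochromatic_def)
  also have "\<dots> = (\<Sum>S\<in>triangles n E. if c \<in> monochromatic S then 1 else 0)"
    by (rule sum.inter_filter[OF finite_triangles])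
  finally show ?thesis
    by (simp add: indicator_def of_bool_def)
qed

lemma prob_mono_triangles_deviation_le:
  assumes G: "simple_graph_on n E" and N: "N > 0" and t_pos: "num_triangles n E > 0" and "\<epsilon> > 0"
  defines "t \<equiv> real (num_triangles n E)" and "p \<equiv> 1 / real N"
    and "D \<equiv> real (max_edge_tri n E)"
  shows "measure_pmf.prob (coloring n N)
            {c. \<bar>real (mono_triangles n E c)
                 - measure_pmf.expectation (coloring n N) (\<lambda>c. real (mono_triangles n E c))\<bar>
               \<ge> \<epsilon> * measure_pmf.expectation (coloring n N) (\<lambda>c. real (mono_triangles n E c))}
         \<le> (1 / (t * p\<^sup>2) + 3 * D / (t * p)) / \<epsilon>\<^sup>2"
proof -
  interpret uniform_coloring "{1..n}" "{0..<N}" 0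
    using N by unfold_locales auto
  let ?T = "\<lambda>c. real (mono_triangles n E c)"
  have tri: "S \<subseteq> {1..n} \<and> card S = 3" if "S \<in> triangles n E" for S
    using triangle_subset_card[OF that] by simp
  have p_eq: "q = p"
    by (simp add: p_def)
  have "p > 0" "t > 0"
    using N t_pos by (simp_all add: p_def t_def)
  have "measure_pmf.expectation P ?T = card (triangles n E) * q\<^sup>2"
    using expectation_count_monochromatic[OF finite_triangles tri]
    by (simp only: mono_triangles_eq_sum_indicator)
  hence mean: "measure_pmf.expectation P ?T = t * p\<^sup>2"
    by (simp add: p_def t_def num_triangles_def)
  have "measure_pmf.variance P ?T
      \<le> card (triangles n E) * q\<^sup>2 + card (triangles n E) * (3 * max_edge_tri n E) * q ^ 3"
    using variance_count_monochromatic_le[OF finite_triangles tri card_triangles_sharing_edge_le[OF G]]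
    by (simp only: mono_triangles_eq_sum_indicator)
  hence var: "measure_pmf.variance P ?T \<le> t * p\<^sup>2 + t * (3 * D) * p ^ 3"
    by (simp add: p_def t_def D_def num_triangles_def)
  have "measure_pmf.prob P {c \<in> space (measure_pmf P).
          \<bar>?T c - measure_pmf.expectation P ?T\<bar> \<ge> \<epsilon> * (t * p\<^sup>2)}
        \<le> measure_pmf.variance P ?T / (\<epsilon> * (t * p\<^sup>2))\<^sup>2"
  proof (rule measure_pmf.Chebyshev_inequality)
    show "\<epsilon> * (t * p\<^sup>2) > 0"
      using \<open>\<epsilon> > 0\<close> \<open>p > 0\<close> \<open>t > 0\<close> by simp
  qed (simp, rule integrable_P)
  also have "\<dots> \<le> (t * p\<^sup>2 + t * (3 * D) * p ^ 3) / (\<epsilon> * (t * p\<^sup>2))\<^sup>2"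
    by (rule divide_right_mono[OF var]) simp
  also have "\<dots> = (1 / (t * p\<^sup>2) + 3 * D / (t * p)) / \<epsilon>\<^sup>2"
    using \<open>\<epsilon> > 0\<close> \<open>p > 0\<close> \<open>t > 0\<close>
    by (simp add: field_simps power2_eq_square power3_eq_cube)
  finally show ?thesis
    unfolding coloring_def mean by simp
qed

lemma deviation_bound_le_of_rate:
  fixes t p D L :: real
  assumes "t > 0" "p > 0" "L > 0" and "p \<ge> D * L / t" and "p \<ge> L / sqrt t"
  shows "1 / (t * p\<^sup>2) + 3 * D / (t * p) \<le> 1 / L\<^sup>2 + 3 / L"
proof -
  have "L \<le> p * sqrt t"
    using assms by (simp add: divide_le_eq mult.commute)
  hence "L\<^sup>2 \<le> (p * sqrt t)\<^sup>2"
    using assms(3) by (intro power_mono) auto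
  hence "L\<^sup>2 \<le> t * p\<^sup>2"
    using assms(1) by (simp add: power_mult_distrib mult.commute)
  hence "1 / (t * p\<^sup>2) \<le> 1 / L\<^sup>2"
    using assms(1-3) by (intro divide_left_mono) auto
  moreover have "D / (t * p) \<le> 1 / L"
    using assms by (simp add: divide_simps mult.commute)
  ultimately show ?thesis
    by simp
qed

theorem theorem2:
  fixes G :: "nat \<Rightarrow> nat set set" and N :: "nat \<Rightarrow> nat"
  assumes graph: "\<And>n. simple_graph_on n (G n)"
    and Npos: "\<And>n. N n > 0"
    and tpos: "eventually (\<lambda>n. num_triangles n (G n) > 0) at_top"
    and pbound: "eventually (\<lambda>n. 1 / real (N n) \<ge>
        max (real (max_edge_tri n (G n)) * ln (real n) / real (num_triangles n (G n)))
            (ln (real n) / sqrt (real (num_triangles n (G n))))) at_top"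
    and eps: "\<epsilon> > 0"
  shows "(\<lambda>n. measure_pmf.prob (coloring n (N n))
            {c. \<bar>real (mono_triangles n (G n) c)
                 - measure_pmf.expectation (coloring n (N n)) (\<lambda>c. real (mono_triangles n (G n) c))\<bar>
               \<ge> \<epsilon> * measure_pmf.expectation (coloring n (N n)) (\<lambda>c. real (mono_triangles n (G n) c))})
         \<longlonglongrightarrow> 0"
proof (rule tendsto_sandwich[where f = "\<lambda>_. 0"
      and h = "\<lambda>n. (1 / (ln (real n))\<^sup>2 + 3 / ln (real n)) / \<epsilon>\<^sup>2"], goal_cases)
  case 2
  show ?case
    using tpos pbound eventually_ge_at_top[of 3]
  proof eventually_elim
    case (elim n)
    have "ln (real n) > 0"
      using elim(3) by simp
    hence "1 / (real (num_triangles n (G n)) * (1 / real (N n))\<^sup>2)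
             + 3 * real (max_edge_tri n (G n)) / (real (num_triangles n (G n)) * (1 / real (N n)))
           \<le> 1 / (ln (real n))\<^sup>2 + 3 / ln (real n)"
      using elim(1,2) Npos[of n] by (intro deviation_bound_le_of_rate) simp_all
    with prob_mono_triangles_deviation_le[OF graph Npos elim(1) eps] show ?case
      by (rule order.trans[OF _ divide_right_mono]) simp
  qed
next
  case 4
  show ?case
    by (intro tendsto_divide_zero) real_asymp
qed simp_all

end
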